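(* Let $\Psi$ be a Lévy–Khintchine function with Lévy measure $\pi$, parameters $\gamma$ and $\lambda=-\Psi(0)$, and let $\Phi(z)=\max(\gamma,0)z+\int_{(1,\infty)}(1-e^{-zu})\pi(\mathrm du)+\lambda$. Let $\hat\Sigma(x)=\hat{\mathrm a}x^2+dx+\int_0^\infty(e^{-ux}-1+ux)\eta(\mathrm du)$ ($\hat{\mathrm a},d\ge0$, $\int(u\wedge u^2)\eta(\mathrm du)<\infty$) with $\int_1^\infty\frac{\mathrm du}{\hat\Sigma(u)}<\infty$. In each of the following cases $\overline\theta_{\Phi,\hat\Sigma}=\underline\theta_{\Phi,\hat\Sigma}=:\theta$ and: (1) if $\lambda>0$, then $\theta=\lambda/\hat{\mathrm a}$ if $\hat{\mathrm a}>0$ and $\theta=\infty$ if $\hat{\mathrm a}=0$; (2) if $\lambda=0$ and $\hat{\mathrm a}>0$, then $\theta=0$.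
   Context: A Lévy–Khintchine function is $\Psi(x)=\mathrm a x^2-\gamma x-\lambda+\int_0^\infty(e^{-ux}-1+ux\mathbf 1_{(0,1]}(u))\pi(\mathrm du)$, $x\ge0$, with $\mathrm a\ge0,\gamma\in\mathbb R,\lambda\ge0$, $\int(1\wedge u^2)\pi(\mathrm du)<\infty$. For $\hat\Sigma$ as in the claim, the scale function $\hat W:[0,\infty)\to[0,\infty)$ is the continuous increasing function with $\hat W(0)=0$ and $\int_0^\infty e^{-xz}\hat W(z)\mathrm dz=1/\hat\Sigma(x)$, $x>0$. Define $\overline\theta_{\Phi,\hat\Sigma}=\limsup_{x\to\infty}x\int_0^\infty e^{-zx}\frac{\Phi(z)\hat W(z)}{z}\mathrm dz$ and $\underline\theta_{\Phi,\hat\Sigma}$ the same with $\liminf$ (values in $[0,\infty]$). *)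

theory Defs
  imports "HOL-Analysis.Analysis"
begin

definition Phi_fun :: "real \<Rightarrow> real measure \<Rightarrow> real \<Rightarrow> real \<Rightarrow> real" where
  "Phi_fun gam \<mu> lam z =
     max gam 0 * z + (LINT u:{1<..}|\<mu>. (1 - exp (- (z * u)))) + lam"

definition Sigma_fun :: "real \<Rightarrow> real \<Rightarrow> real measure \<Rightarrow> real \<Rightarrow> real" where
  "Sigma_fun ah d \<eta> x =
     ah * x\<^sup>2 + d * x + (LINT u:{0<..}|\<eta>. (exp (- (u * x)) - 1 + u * x))"

definition is_scale_function :: "(real \<Rightarrow> real) \<Rightarrow> (real \<Rightarrow> real) \<Rightarrow> bool" where
  "is_scale_function \<Sigma> W \<longleftrightarrow>
     continuous_on {0..} W \<and> mono_on {0..} W \<and> (\<forall>z\<ge>0. W z \<ge> 0) \<and> W 0 = 0 \<and>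
     (\<forall>x>0. (\<integral>\<^sup>+ z\<in>{0..}. ennreal (exp (- (x * z)) * W z) \<partial>lborel) = ennreal (1 / \<Sigma> x))"

definition theta_integral :: "(real \<Rightarrow> real) \<Rightarrow> (real \<Rightarrow> real) \<Rightarrow> real \<Rightarrow> ennreal" where
  "theta_integral \<Phi> W x =
     ennreal x * (\<integral>\<^sup>+ z\<in>{0<..}. ennreal (exp (- (z * x)) * \<Phi> z * W z / z) \<partial>lborel)"

definition theta_upper :: "(real \<Rightarrow> real) \<Rightarrow> (real \<Rightarrow> real) \<Rightarrow> ennreal" where
  "theta_upper \<Phi> W = Limsup at_top (theta_integral \<Phi> W)"

definition theta_lower :: "(real \<Rightarrow> real) \<Rightarrow> (real \<Rightarrow> real) \<Rightarrow> ennreal" where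
  "theta_lower \<Phi> W = Liminf at_top (theta_integral \<Phi> W)"

end

(*
  Writing exp (-z x) / z as the integral of exp (-z y) over y >= x, Tonelli and the
  Laplace transform of the scale function give

    int_0^oo exp (-z x) W(z) / z dz = int_x^oo dy / Sigma(y).

  Dominated convergence shows Sigma(y) / y^2 -> ahat, so x int_x^oo dy / Sigma(y) tends to
  1 / ahat, and to oo when ahat = 0. In the theta integral, Phi >= lambda gives the lower
  bound lambda x int_x^oo dy / Sigma(y). Conversely Phi <= lambda + e near 0, while Phi and W
  grow at most exponentially, so the contribution of z >= b is O(x exp (-(x - 2) b)). Hence
  theta = lambda / ahat, read as oo for ahat = 0 < lambda.
*)
theory Submission
  imports Defs
begin

section \<open>Growth of \<open>Sigma_fun\<close>\<close>

definition exp_remainder1 :: "real \<Rightarrow> real" where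
  "exp_remainder1 t = exp (- t) - 1 + t"

lemma exp_remainder1_nonneg: "0 \<le> exp_remainder1 t"
  unfolding exp_remainder1_def using exp_ge_add_one_self[of "- t"] by simp

lemma exp_remainder1_pos: "0 < t \<Longrightarrow> 0 < exp_remainder1 t"
  unfolding exp_remainder1_def using exp_minus_greater[of t] by simp

lemma exp_remainder1_le_square:
  assumes "0 \<le> t"
  shows "exp_remainder1 t \<le> t\<^sup>2 / 2"
proof -
  let ?f = "\<lambda>t::real. t\<^sup>2 / 2 - t + 1 - exp (- t)"
  have "?f 0 \<le> ?f t"
  proof (rule DERIV_nonneg_imp_nondecreasing[OF assms])
    fix s :: real
    show "\<exists>y. (?f has_real_derivative y) (at s) \<and> 0 \<le> y"
      using exp_ge_add_one_self[of "- s"]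
      by (intro exI[of _ "s - 1 + exp (- s)"]) (auto intro!: derivative_eq_intros)
  qed
  then show ?thesis by (simp add: exp_remainder1_def)
qed

lemma exp_remainder1_le_min:
  assumes "0 \<le> u" "0 \<le> t"
  shows "exp_remainder1 (u * t) \<le> max t (t\<^sup>2) * min u (u\<^sup>2)"
proof (cases "u \<le> 1")
  case True
  have "exp_remainder1 (u * t) \<le> (u * t)\<^sup>2 / 2"
    using assms by (intro exp_remainder1_le_square) simp
  also have "\<dots> \<le> t\<^sup>2 * u\<^sup>2" by (simp add: power_mult_distrib)
  also have "\<dots> \<le> max t (t\<^sup>2) * min u (u\<^sup>2)"
    using assms True by (simp add: min_absorb2 power2_eq_square mult_left_le mult_right_mono)
  finally show ?thesis .
next
  case False
  have "exp_remainder1 (u * t) \<le> t * u" using assms by (simp add: exp_remainder1_def mult.commute)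
  also have "\<dots> \<le> max t (t\<^sup>2) * min u (u\<^sup>2)"
    using assms False by (simp add: min_absorb1 power2_eq_square mult_right_mono)
  finally show ?thesis .
qed

context
  fixes \<eta> :: "real measure"
  assumes sets_eta: "sets \<eta> = sets borel"
    and eta_finite: "(\<integral>\<^sup>+ u\<in>{0<..}. ennreal (min u (u\<^sup>2)) \<partial>\<eta>) < \<infinity>"
begin

lemma integrable_eta_min: "integrable \<eta> (\<lambda>u. indicator {0<..} u * min u (u\<^sup>2))"
proof (rule integrableI_bounded)
  show "(\<lambda>u. indicator {0<..} u * min u (u\<^sup>2)) \<in> borel_measurable \<eta>"
    using sets_eta by measurable
  have "(\<integral>\<^sup>+ u. ennreal (norm (indicator {0<..} u * min u (u\<^sup>2))) \<partial>\<eta>)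
      = (\<integral>\<^sup>+ u\<in>{0<..}. ennreal (min u (u\<^sup>2)) \<partial>\<eta>)"
    by (intro nn_integral_cong) (auto split: split_indicator)
  then show "(\<integral>\<^sup>+ u. ennreal (norm (indicator {0<..} u * min u (u\<^sup>2))) \<partial>\<eta>) < \<infinity>"
    using eta_finite by simp
qed

lemma integrable_eta_exp_remainder1:
  assumes "0 \<le> y"
  shows "integrable \<eta> (\<lambda>u. indicator {0<..} u * exp_remainder1 (u * y))"
proof (rule Bochner_Integration.integrable_bound)
  show "integrable \<eta> (\<lambda>u. max y (y\<^sup>2) * (indicator {0<..} u * min u (u\<^sup>2)))"
    using integrable_eta_min by simp
  show "(\<lambda>u. indicator {0<..} u * exp_remainder1 (u * y)) \<in> borel_measurable \<eta>"
    using sets_eta unfolding exp_remainder1_def by measurable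
  show "AE u in \<eta>. norm (indicator {0<..} u * exp_remainder1 (u * y))
      \<le> norm (max y (y\<^sup>2) * (indicator {0<..} u * min u (u\<^sup>2)))"
    using exp_remainder1_le_min[of _ y] exp_remainder1_nonneg assms
    by (auto split: split_indicator)
qed

lemma Sigma_fun_eq:
  "Sigma_fun ah d \<eta> y = ah * y\<^sup>2 + d * y + (\<integral>u. indicator {0<..} u * exp_remainder1 (u * y) \<partial>\<eta>)"
  unfolding Sigma_fun_def exp_remainder1_def set_lebesgue_integral_def by simp

lemma tendsto_Sigma_fun_div_square: "((\<lambda>y. Sigma_fun ah d \<eta> y / y\<^sup>2) \<longlongrightarrow> ah) at_top"
proof -
  have "((\<lambda>y. \<integral>u. indicator {0<..} u * exp_remainder1 (u * y) / y\<^sup>2 \<partial>\<eta>) \<longlongrightarrow> (\<integral>u. 0 \<partial>\<eta>)) at_top"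
  proof (rule integral_dominated_convergence_at_top[OF _ _ integrable_eta_min])
    show "(\<lambda>u. indicator {0<..} u * exp_remainder1 (u * y) / y\<^sup>2) \<in> borel_measurable \<eta>" for y
      using sets_eta unfolding exp_remainder1_def by measurable
    show "AE u in \<eta>. ((\<lambda>y. indicator {0<..} u * exp_remainder1 (u * y) / y\<^sup>2) \<longlongrightarrow> 0) at_top"
    proof (intro AE_I2)
      fix u :: real
      have "((\<lambda>y. (exp (- (u * y)) - 1 + u * y) / y\<^sup>2) \<longlongrightarrow> 0) at_top" if "0 < u"
        using that by real_asymp
      then show "((\<lambda>y. indicator {0<..} u * exp_remainder1 (u * y) / y\<^sup>2) \<longlongrightarrow> 0) at_top"
        by (cases "0 < u") (simp_all add: exp_remainder1_def)
    qed
    show "\<forall>\<^sub>F y in at_top. AE u in \<eta>.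
        norm (indicator {0<..} u * exp_remainder1 (u * y) / y\<^sup>2) \<le> indicator {0<..} u * min u (u\<^sup>2)"
    proof (intro eventually_at_top_linorderI[of 1] AE_I2)
      fix y u :: real assume "1 \<le> y"
      then have "max y (y\<^sup>2) = y\<^sup>2" by (simp add: power2_eq_square)
      then show "norm (indicator {0<..} u * exp_remainder1 (u * y) / y\<^sup>2)
          \<le> indicator {0<..} u * min u (u\<^sup>2)"
        using exp_remainder1_le_min[of u y] exp_remainder1_nonneg[of "u * y"] \<open>1 \<le> y\<close>
        by (auto split: split_indicator simp: divide_le_eq mult.commute)
    qed
  qed simp
  then have lim: "((\<lambda>y. ah + d / y + (\<integral>u. indicator {0<..} u * exp_remainder1 (u * y) \<partial>\<eta>) / y\<^sup>2)
      \<longlongrightarrow> ah + 0 + 0) at_top"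
    by (intro tendsto_add tendsto_const
        tendsto_divide_0[OF tendsto_const filterlim_at_top_imp_at_infinity[OF filterlim_ident]])
      simp_all
  have "\<forall>\<^sub>F y in at_top. ah + d / y + (\<integral>u. indicator {0<..} u * exp_remainder1 (u * y) \<partial>\<eta>) / y\<^sup>2
      = Sigma_fun ah d \<eta> y / y\<^sup>2"
    using eventually_gt_at_top[of 0]
    by eventually_elim (simp add: Sigma_fun_eq field_simps power2_eq_square)
  from Lim_transform_eventually[OF lim this] show ?thesis by simp
qed

lemma Sigma_fun_nonpos_imp_zero:
  assumes "0 \<le> ah" "0 \<le> d" "0 < y" "Sigma_fun ah d \<eta> y \<le> 0"
  shows "Sigma_fun ah d \<eta> z = 0"
proof -
  let ?G = "\<lambda>y. \<integral>u. indicator {0<..} u * exp_remainder1 (u * y) \<partial>\<eta>"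
  have G_nonneg: "0 \<le> ?G z" for z
    by (intro integral_nonneg_AE) (simp add: exp_remainder1_nonneg)
  have "ah * y\<^sup>2 + d * y + ?G y \<le> 0" "0 \<le> ah * y\<^sup>2" "0 \<le> d * y"
    using assms by (simp_all add: Sigma_fun_eq)
  then have "ah * y\<^sup>2 = 0" "d * y = 0" "?G y = 0" using G_nonneg[of y] by linarith+
  then have ah: "ah = 0" and d: "d = 0" and "?G y = 0" using \<open>0 < y\<close> by simp_all
  then have "AE u in \<eta>. indicator {0<..} u * exp_remainder1 (u * y) = 0"
    using integral_nonneg_eq_0_iff_AE[OF integrable_eta_exp_remainder1] \<open>0 < y\<close>
    by (simp add: exp_remainder1_nonneg)
  then have "AE u in \<eta>. u \<le> 0"
  proof (rule eventually_mono)
    fix u assume "indicator {0<..} u * exp_remainder1 (u * y) = 0"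
    then show "u \<le> 0" using exp_remainder1_pos[of "u * y"] \<open>0 < y\<close> by (cases "0 < u") auto
  qed
  then have "AE u in \<eta>. indicator {0<..} u * exp_remainder1 (u * z) = 0"
    by (rule eventually_mono) simp
  then have "?G z = 0"
    by (rule integral_eq_zero_AE)
  then show ?thesis
    by (simp add: Sigma_fun_eq ah d)
qed

lemma Sigma_fun_pos:
  assumes "0 \<le> ah" "0 \<le> d"
    and finite: "(\<integral>\<^sup>+ u\<in>{1..}. inverse (ennreal (Sigma_fun ah d \<eta> u)) \<partial>lborel) < \<infinity>"
    and "0 < y"
  shows "0 < Sigma_fun ah d \<eta> y"
proof (rule ccontr)
  assume "\<not> 0 < Sigma_fun ah d \<eta> y"
  then have Sigma_zero: "Sigma_fun ah d \<eta> z = 0" for z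
    using Sigma_fun_nonpos_imp_zero assms by simp
  have "(\<integral>\<^sup>+ u\<in>{1..}. inverse (ennreal (Sigma_fun ah d \<eta> u)) \<partial>lborel)
      = (\<integral>\<^sup>+ u. \<infinity> * indicator {1::real..} u \<partial>lborel)"
    by (intro nn_integral_cong) (simp add: Sigma_zero)
  also have "\<dots> = \<infinity> * emeasure lborel {1::real..}"
    by (rule nn_integral_cmult_indicator) simp
  also have "\<dots> = \<infinity>"
    using emeasure_mono[of "{1..2::real}" "{1..}" lborel] by (auto simp: ennreal_top_mult)
  finally show False using finite by simp
qed

end

section \<open>Tail integrals of \<open>1 / S\<close>\<close>

definition tail_integral_inverse :: "(real \<Rightarrow> real) \<Rightarrow> real \<Rightarrow> ennreal" where
  "tail_integral_inverse S x = (\<integral>\<^sup>+ y\<in>{x..}. ennreal (1 / S y) \<partial>lborel)"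

lemma nn_integral_exp_minus_to_infinity:
  fixes a c :: real
  assumes "0 < a"
  shows "(\<integral>\<^sup>+ y\<in>{c..}. ennreal (exp (- (a * y))) \<partial>lborel) = ennreal (exp (- (a * c)) / a)"
  using nn_integral_has_integral_lebesgue'[OF _ has_integral_exp_minus_to_infinity[OF assms, of c]]
  by simp

lemma tail_integral_inverse_square:
  assumes "0 < c" "0 < x"
  shows "tail_integral_inverse (\<lambda>y. c * y\<^sup>2) x = ennreal (1 / (c * x))"
proof -
  have "((\<lambda>y. 1 / y ^ 2) has_integral 1 / x) {x..}"
    using has_integral_inverse_power_to_inf[of 2 x] assms by simp
  then have "((\<lambda>y. 1 / y ^ 2 * (1 / c)) has_integral 1 / x * (1 / c)) {x..}"
    by (rule has_integral_mult_left)
  then have "((\<lambda>y. 1 / (c * y\<^sup>2)) has_integral 1 / (c * x)) {x..}"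
    by (simp add: field_simps)
  from nn_integral_has_integral_lebesgue'[OF _ this] show ?thesis
    using assms by (simp add: tail_integral_inverse_def)
qed

lemma tail_integral_inverse_antimono:
  assumes "\<And>y. x \<le> y \<Longrightarrow> 0 < S y" "\<And>y. x \<le> y \<Longrightarrow> S y \<le> T y"
  shows "tail_integral_inverse T x \<le> tail_integral_inverse S x"
  unfolding tail_integral_inverse_def
proof (intro nn_integral_mono)
  fix y
  have "1 / T y \<le> 1 / S y" if "x \<le> y"
    using assms[OF that] by (intro divide_left_mono) auto
  then show "ennreal (1 / T y) * indicator {x..} y \<le> ennreal (1 / S y) * indicator {x..} y"
    by (auto intro: ennreal_leI split: split_indicator)
qed

lemma eventually_inverse_le_mult_tail_integral_inverse:
  assumes "\<forall>\<^sub>F y in at_top. 0 < S y \<and> S y \<le> c * y\<^sup>2" and "0 < c"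
  shows "\<forall>\<^sub>F x in at_top. inverse (ennreal c) \<le> ennreal x * tail_integral_inverse S x"
proof -
  obtain Y where Y: "\<And>y. Y \<le> y \<Longrightarrow> 0 < S y \<and> S y \<le> c * y\<^sup>2"
    using assms(1) unfolding eventually_at_top_linorder by blast
  show ?thesis
  proof (intro eventually_at_top_linorderI[of "max Y 1"])
    fix x assume x: "max Y 1 \<le> x"
    have "inverse (ennreal c) = ennreal x * tail_integral_inverse (\<lambda>y. c * y\<^sup>2) x"
      using x \<open>0 < c\<close> by (simp add: tail_integral_inverse_square inverse_ennreal inverse_eq_divide
          ennreal_mult'[symmetric])
    also have "\<dots> \<le> ennreal x * tail_integral_inverse S x"
      using Y x by (intro mult_left_mono tail_integral_inverse_antimono) auto
    finally show "inverse (ennreal c) \<le> ennreal x * tail_integral_inverse S x" .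
  qed
qed

lemma eventually_mult_tail_integral_inverse_le:
  assumes "\<forall>\<^sub>F y in at_top. c * y\<^sup>2 \<le> S y" and "0 < c"
  shows "\<forall>\<^sub>F x in at_top. ennreal x * tail_integral_inverse S x \<le> inverse (ennreal c)"
proof -
  obtain Y where Y: "\<And>y. Y \<le> y \<Longrightarrow> c * y\<^sup>2 \<le> S y"
    using assms(1) unfolding eventually_at_top_linorder by blast
  show ?thesis
  proof (intro eventually_at_top_linorderI[of "max Y 1"])
    fix x assume x: "max Y 1 \<le> x"
    have "ennreal x * tail_integral_inverse S x \<le> ennreal x * tail_integral_inverse (\<lambda>y. c * y\<^sup>2) x"
      using Y x \<open>0 < c\<close> by (intro mult_left_mono tail_integral_inverse_antimono) auto
    also have "\<dots> = inverse (ennreal c)"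
      using x \<open>0 < c\<close> by (simp add: tail_integral_inverse_square inverse_ennreal inverse_eq_divide
          ennreal_mult'[symmetric])
    finally show "ennreal x * tail_integral_inverse S x \<le> inverse (ennreal c)" .
  qed
qed

text \<open>For \<open>a = 0\<close> the limit \<open>inverse (ennreal 0)\<close> is \<open>\<infinity>\<close>.\<close>

lemma tendsto_mult_tail_integral_inverse:
  fixes S :: "real \<Rightarrow> real"
  assumes pos: "\<forall>\<^sub>F y in at_top. 0 < S y"
    and lim: "((\<lambda>y. S y / y\<^sup>2) \<longlongrightarrow> a) at_top"
  shows "((\<lambda>x. ennreal x * tail_integral_inverse S x) \<longlongrightarrow> inverse (ennreal a)) at_top"
proof -
  have "0 \<le> a"
    using pos by (intro tendsto_lowerbound[OF lim]) (auto elim: eventually_mono)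
  have "continuous_on UNIV (\<lambda>c. inverse (ennreal c))"
    by (intro continuous_on_inverse_ennreal continuous_on_ennreal continuous_on_id)
  then have inverse_cont: "((\<lambda>c. inverse (ennreal c)) \<longlongrightarrow> inverse (ennreal a)) (at a within A)" for A
    by (metis continuous_on_eq_continuous_at open_UNIV UNIV_I
        continuous_at_imp_continuous_at_within continuous_within)
  show ?thesis
  proof (rule order_tendstoI)
    fix t assume "t < inverse (ennreal a)"
    then have "\<forall>\<^sub>F c in at_right a. a < c \<and> t < inverse (ennreal c)"
      using order_tendstoD(1)[OF inverse_cont] eventually_at_right_less by (intro eventually_conj)
    then obtain c where c: "a < c" "t < inverse (ennreal c)"
      using eventually_happens[of _ "at_right a"] by auto
    have "\<forall>\<^sub>F y in at_top. 0 < S y \<and> S y \<le> c * y\<^sup>2"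
      using pos order_tendstoD(2)[OF lim c(1)] eventually_gt_at_top[of 0]
      by eventually_elim (simp add: pos_divide_less_eq less_imp_le)
    from eventually_inverse_le_mult_tail_integral_inverse[OF this]
    show "\<forall>\<^sub>F x in at_top. t < ennreal x * tail_integral_inverse S x"
      using c \<open>0 \<le> a\<close> by (auto elim: eventually_mono intro: less_le_trans)
  next
    fix t assume "inverse (ennreal a) < t"
    then have "0 < a" using \<open>0 \<le> a\<close> by (cases "a = 0") auto
    then have "\<forall>\<^sub>F c in at_left a. c \<in> {0<..<a} \<and> inverse (ennreal c) < t"
      using eventually_at_left_real order_tendstoD(2)[OF inverse_cont \<open>inverse (ennreal a) < t\<close>]
      by (intro eventually_conj)
    then obtain c where c: "0 < c" "c < a" "inverse (ennreal c) < t"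
      using eventually_happens[of _ "at_left a"] by auto
    have "\<forall>\<^sub>F y in at_top. c * y\<^sup>2 \<le> S y"
      using order_tendstoD(1)[OF lim c(2)] eventually_gt_at_top[of 0]
      by eventually_elim (simp add: pos_less_divide_eq less_imp_le)
    from eventually_mult_tail_integral_inverse_le[OF this c(1)]
    show "\<forall>\<^sub>F x in at_top. ennreal x * tail_integral_inverse S x < t"
      using c(3) by (auto elim: eventually_mono intro: le_less_trans)
  qed
qed

section \<open>Scale functions\<close>

context
  fixes S W :: "real \<Rightarrow> real"
  assumes W: "is_scale_function S W"
begin

lemma scale_function_nonneg: "0 \<le> z \<Longrightarrow> 0 \<le> W z"
  using W by (simp add: is_scale_function_def)

lemma scale_function_measurable: "(\<lambda>z. indicator {0<..} z * W z) \<in> borel_measurable borel"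
proof -
  have "continuous_on {0<..} W"
    using W by (auto simp: is_scale_function_def intro: continuous_on_subset)
  then show ?thesis
    using borel_measurable_continuous_on_indicator[of "{0<..}" W] by simp
qed

lemma scale_function_div_measurable:
  "(\<lambda>z. ennreal (exp (- (z * x)) * W z / z) * indicator {0<..} z) \<in> borel_measurable borel"
proof -
  have "(\<lambda>z. ennreal (exp (- (z * x)) / z * (indicator {0<..} z * W z))) \<in> borel_measurable borel"
    using scale_function_measurable by measurable
  then show ?thesis
    by (rule measurable_cong[THEN iffD1, rotated]) (simp split: split_indicator)
qed

lemma scale_function_laplace_Ioi:
  assumes "0 < y"
  shows "(\<integral>\<^sup>+ z\<in>{0<..}. ennreal (exp (- (y * z)) * W z) \<partial>lborel) = ennreal (1 / S y)"
proof -
  have "(\<integral>\<^sup>+ z\<in>{0<..}. ennreal (exp (- (y * z)) * W z) \<partial>lborel)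
      = (\<integral>\<^sup>+ z\<in>{0..}. ennreal (exp (- (y * z)) * W z) \<partial>lborel)"
    using W by (intro nn_integral_cong) (auto simp: is_scale_function_def split: split_indicator)
  also have "\<dots> = ennreal (1 / S y)"
    using W assms by (simp add: is_scale_function_def)
  finally show ?thesis .
qed

lemma scale_function_laplace_div:
  assumes "0 < x"
  shows "(\<integral>\<^sup>+ z\<in>{0<..}. ennreal (exp (- (z * x)) * W z / z) \<partial>lborel) = tail_integral_inverse S x"
proof -
  \<comment> \<open>Tonelli for \<open>exp (- (z * x)) / z = \<integral>\<^sup>+ y\<in>{x..}. exp (- (z * y))\<close>\<close>
  define F where
    "F z y = ennreal (exp (- (z * y)) * (indicator {0<..} z * W z)) * indicator {x..} y"
    for z y :: real
  have "(\<lambda>(z, y). F z y) \<in> borel_measurable (lborel \<Otimes>\<^sub>M lborel)"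
    unfolding F_def using scale_function_measurable by measurable
  note Fubini = lborel_pair.Fubini'[OF this]
  have inner_y: "(\<integral>\<^sup>+ y. F z y \<partial>lborel) = ennreal (exp (- (z * x)) * W z / z) * indicator {0<..} z"
    for z
  proof (cases "0 < z")
    case True
    have "(\<integral>\<^sup>+ y. F z y \<partial>lborel)
        = (\<integral>\<^sup>+ y. ennreal (W z) * (ennreal (exp (- (z * y))) * indicator {x..} y) \<partial>lborel)"
      unfolding F_def using True scale_function_nonneg[of z]
      by (intro nn_integral_cong) (simp add: ennreal_mult' mult_ac)
    also have "\<dots> = ennreal (W z) * (\<integral>\<^sup>+ y\<in>{x..}. ennreal (exp (- (z * y))) \<partial>lborel)"
      by (rule nn_integral_cmult) measurable
    also have "\<dots> = ennreal (exp (- (z * x)) * W z / z) * indicator {0<..} z"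
      unfolding nn_integral_exp_minus_to_infinity[OF True]
      using True scale_function_nonneg[of z] by (simp add: ennreal_mult'[symmetric] mult_ac)
    finally show ?thesis .
  qed (simp add: F_def)
  have inner_z: "(\<integral>\<^sup>+ z. F z y \<partial>lborel) = ennreal (1 / S y) * indicator {x..} y" for y
  proof (cases "x \<le> y")
    case True
    then have "(\<integral>\<^sup>+ z. F z y \<partial>lborel) = (\<integral>\<^sup>+ z\<in>{0<..}. ennreal (exp (- (y * z)) * W z) \<partial>lborel)"
      unfolding F_def by (intro nn_integral_cong) (simp add: mult.commute split: split_indicator)
    with True show ?thesis
      using scale_function_laplace_Ioi[of y] \<open>0 < x\<close> by simp
  qed (simp add: F_def)
  show ?thesis
    using Fubini by (simp add: inner_y inner_z tail_integral_inverse_def)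
qed

lemma scale_function_le_exp:
  assumes "0 < S 1" "0 \<le> z"
  shows "W z \<le> exp (z + 1) / S 1"
proof -
  have "ennreal (exp (- (z + 1)) * W z)
      = (\<integral>\<^sup>+ t\<in>{z<..z + 1}. ennreal (exp (- (z + 1)) * W z) \<partial>lborel)"
    by (simp add: nn_integral_cmult_indicator)
  also have "\<dots> \<le> (\<integral>\<^sup>+ t\<in>{0<..}. ennreal (exp (- (1 * t)) * W t) \<partial>lborel)"
  proof (intro nn_integral_mono)
    fix t
    have "exp (- (z + 1)) * W z \<le> exp (- (1 * t)) * W t" if "t \<in> {z<..z + 1}"
      using that assms W scale_function_nonneg[of z]
      by (intro mult_mono) (auto simp: is_scale_function_def intro: mono_onD)
    then show "ennreal (exp (- (z + 1)) * W z) * indicator {z<..z + 1} t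
        \<le> ennreal (exp (- (1 * t)) * W t) * indicator {0<..} t"
      using assms by (auto intro: ennreal_leI split: split_indicator)
  qed
  also have "\<dots> = ennreal (1 / S 1)"
    by (rule scale_function_laplace_Ioi) simp
  finally have "exp (- (z + 1)) * W z \<le> 1 / S 1"
    using assms by simp
  then show ?thesis
    by (metis exp_gt_zero exp_minus' mult_1 pos_divide_le_eq times_divide_eq_left)
qed

end

section \<open>The function \<open>Phi_fun\<close>\<close>

context
  fixes \<mu> :: "real measure"
  assumes sets_mu: "sets \<mu> = sets borel"
    and mu_levy: "(\<integral>\<^sup>+ u\<in>{0<..}. ennreal (min 1 (u\<^sup>2)) \<partial>\<mu>) < \<infinity>"
begin

lemma emeasure_Ioi_1_finite: "emeasure \<mu> {1<..} < \<infinity>"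
proof -
  have "emeasure \<mu> {1<..} = (\<integral>\<^sup>+ u. indicator {1<..} u \<partial>\<mu>)"
    using sets_mu by simp
  also have "\<dots> \<le> (\<integral>\<^sup>+ u\<in>{0<..}. ennreal (min 1 (u\<^sup>2)) \<partial>\<mu>)"
  proof (intro nn_integral_mono)
    fix u :: real
    have "1 \<le> u\<^sup>2" if "1 < u" using that by (simp add: one_le_power)
    then show "indicator {1<..} u \<le> ennreal (min 1 (u\<^sup>2)) * indicator {0<..} u"
      by (auto simp: min_def split: split_indicator)
  qed
  finally show ?thesis using mu_levy by (simp add: le_less_trans)
qed

lemma integrable_indicator_Ioi_1: "integrable \<mu> (\<lambda>u. indicator {1<..} u :: real)"
  using emeasure_Ioi_1_finite sets_mu by (simp add: integrable_real_indicator)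

lemma Phi_integrand_measurable:
  "(\<lambda>u. indicator {1<..} u * (1 - exp (- (z * u)))) \<in> borel_measurable \<mu>"
  using sets_mu by measurable

lemma Phi_fun_eq:
  "Phi_fun gam \<mu> lam z = max gam 0 * z + (\<integral>u. indicator {1<..} u * (1 - exp (- (z * u))) \<partial>\<mu>) + lam"
  unfolding Phi_fun_def set_lebesgue_integral_def by simp

lemma Phi_fun_ge:
  assumes "0 \<le> z"
  shows "lam \<le> Phi_fun gam \<mu> lam z"
proof -
  have "0 \<le> (\<integral>u. indicator {1<..} u * (1 - exp (- (z * u))) \<partial>\<mu>)"
    using assms by (intro integral_nonneg_AE) (auto split: split_indicator)
  then show ?thesis using assms by (simp add: Phi_fun_eq)
qed

lemma Phi_fun_le_exp:
  assumes "0 \<le> lam" "0 \<le> z"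
  shows "Phi_fun gam \<mu> lam z \<le> (max gam 0 + measure \<mu> {1<..} + lam) * exp z"
proof -
  have "(\<integral>u. indicator {1<..} u * (1 - exp (- (z * u))) \<partial>\<mu>) \<le> (\<integral>u. indicator {1<..} u \<partial>\<mu>)"
    using assms
    by (intro integral_mono Bochner_Integration.integrable_bound[OF integrable_indicator_Ioi_1]
        Phi_integrand_measurable AE_I2 integrable_indicator_Ioi_1)
      (auto split: split_indicator)
  then have "Phi_fun gam \<mu> lam z \<le> max gam 0 * z + measure \<mu> {1<..} + lam"
    using sets_mu by (simp add: Phi_fun_eq)
  also have "\<dots> \<le> max gam 0 * exp z + measure \<mu> {1<..} * exp z + lam * exp z"
  proof -
    have "z \<le> exp z" using exp_ge_add_one_self[of z] by linarith
    moreover have "1 \<le> exp z" using assms by simp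
    ultimately show ?thesis
      using assms by (intro add_mono mult_left_mono) (auto simp: mult_le_cancel_left1)
  qed
  finally show ?thesis by (simp add: algebra_simps)
qed

lemma tendsto_Phi_fun_at_right_0: "(Phi_fun gam \<mu> lam \<longlongrightarrow> lam) (at_right 0)"
proof -
  have "((\<lambda>t. \<integral>u. indicator {1<..} u * (1 - exp (- (inverse t * u))) \<partial>\<mu>) \<longlongrightarrow> (\<integral>u. 0 \<partial>\<mu>)) at_top"
  proof (rule integral_dominated_convergence_at_top[OF _ _ integrable_indicator_Ioi_1])
    show "(\<lambda>u. indicator {1<..} u * (1 - exp (- (inverse t * u)))) \<in> borel_measurable \<mu>" for t
      by (rule Phi_integrand_measurable)
    have lim_u: "((\<lambda>t. 1 - exp (- (inverse t * u))) \<longlongrightarrow> 0) at_top" for u :: real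
      by real_asymp
    show "AE u in \<mu>. ((\<lambda>t. indicator {1<..} u * (1 - exp (- (inverse t * u)))) \<longlongrightarrow> 0) at_top"
      by (intro AE_I2 tendsto_mult_right_zero lim_u)
    show "\<forall>\<^sub>F t in at_top. AE u in \<mu>.
        norm (indicator {1<..} u * (1 - exp (- (inverse t * u)))) \<le> indicator {1<..} u"
      by (intro eventually_at_top_linorderI[of 1] AE_I2) (auto split: split_indicator)
  qed simp
  then have "((\<lambda>z. \<integral>u. indicator {1<..} u * (1 - exp (- (z * u))) \<partial>\<mu>) \<longlongrightarrow> 0) (at_right 0)"
    by (simp add: filterlim_at_top_to_right)
  then have "((\<lambda>z. max gam 0 * z + (\<integral>u. indicator {1<..} u * (1 - exp (- (z * u))) \<partial>\<mu>) + lam)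
      \<longlongrightarrow> max gam 0 * 0 + 0 + lam) (at_right 0)"
    by (intro tendsto_intros)
  then show ?thesis by (simp add: Phi_fun_eq[abs_def])
qed

end

section \<open>Asymptotics of \<open>theta_integral\<close>\<close>

lemma theta_integral_ge:
  assumes W: "is_scale_function S W" and "0 < x" "0 \<le> lam"
    and Phi_ge: "\<And>z. 0 < z \<Longrightarrow> lam \<le> \<Phi> z"
  shows "ennreal lam * (ennreal x * tail_integral_inverse S x) \<le> theta_integral \<Phi> W x"
proof -
  have "ennreal lam * tail_integral_inverse S x
      = (\<integral>\<^sup>+ z. ennreal lam * (ennreal (exp (- (z * x)) * W z / z) * indicator {0<..} z) \<partial>lborel)"
    by (simp add: scale_function_laplace_div[OF W \<open>0 < x\<close>, symmetric] nn_integral_cmult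
        scale_function_div_measurable[OF W])
  also have "\<dots> \<le> (\<integral>\<^sup>+ z\<in>{0<..}. ennreal (exp (- (z * x)) * \<Phi> z * W z / z) \<partial>lborel)"
  proof (intro nn_integral_mono)
    fix z
    have "lam * (exp (- (z * x)) * W z / z) \<le> exp (- (z * x)) * \<Phi> z * W z / z" if "0 < z"
      using mult_right_mono[OF Phi_ge[OF that], of "exp (- (z * x)) * W z / z"]
        scale_function_nonneg[OF W, of z] that
      by (simp add: mult_ac)
    then show "ennreal lam * (ennreal (exp (- (z * x)) * W z / z) * indicator {0<..} z)
        \<le> ennreal (exp (- (z * x)) * \<Phi> z * W z / z) * indicator {0<..} z"
      using \<open>0 \<le> lam\<close>
      by (auto simp: ennreal_mult'[symmetric] intro: ennreal_leI split: split_indicator)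
  qed
  finally have "ennreal x * (ennreal lam * tail_integral_inverse S x) \<le> theta_integral \<Phi> W x"
    unfolding theta_integral_def by (rule mult_left_mono) simp
  then show ?thesis by (simp add: mult.left_commute)
qed

lemma theta_integrand_le:
  assumes W: "is_scale_function S W" and b: "0 < b" and "0 \<le> l" "0 \<le> M"
    and near: "\<And>z. 0 < z \<Longrightarrow> z < b \<Longrightarrow> \<Phi> z \<le> l"
    and far: "\<And>z. b \<le> z \<Longrightarrow> \<Phi> z * W z \<le> M * exp (2 * z)"
  shows "ennreal (exp (- (z * x)) * \<Phi> z * W z / z) * indicator {0<..} z
    \<le> ennreal l * (ennreal (exp (- (z * x)) * W z / z) * indicator {0<..} z)
      + ennreal (M / b) * (ennreal (exp (- ((x - 2) * z))) * indicator {b..} z)"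
proof (cases "0 < z")
  case z: True
  show ?thesis
  proof (cases "z < b")
    case True
    have "exp (- (z * x)) * \<Phi> z * W z / z \<le> l * (exp (- (z * x)) * W z / z)"
      using mult_right_mono[OF near[OF z True], of "exp (- (z * x)) * W z / z"]
        scale_function_nonneg[OF W, of z] z
      by (simp add: mult_ac)
    then show ?thesis
      using z \<open>0 \<le> l\<close> by (simp add: ennreal_mult'[symmetric] ennreal_leI add_increasing2)
  next
    case False
    have "exp (- (z * x)) * \<Phi> z * W z / z \<le> exp (- (z * x)) * (M * exp (2 * z)) / z"
      using far[of z] False z by (simp add: mult.assoc divide_right_mono)
    also have "\<dots> \<le> exp (- (z * x)) * (M * exp (2 * z)) / b"
      using False b \<open>0 \<le> M\<close> by (intro divide_left_mono) auto
    also have "\<dots> = M / b * exp (- ((x - 2) * z))"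
      by (simp add: algebra_simps flip: exp_add)
    finally show ?thesis
      using False \<open>0 \<le> M\<close> b by (simp add: ennreal_mult'[symmetric] ennreal_leI add_increasing)
  qed
qed simp

lemma theta_integral_le:
  assumes W: "is_scale_function S W" and x: "2 < x" and b: "0 < b" and "0 \<le> l" "0 \<le> M"
    and near: "\<And>z. 0 < z \<Longrightarrow> z < b \<Longrightarrow> \<Phi> z \<le> l"
    and far: "\<And>z. b \<le> z \<Longrightarrow> \<Phi> z * W z \<le> M * exp (2 * z)"
  shows "theta_integral \<Phi> W x \<le> ennreal l * (ennreal x * tail_integral_inverse S x)
      + ennreal (M / b * (x * exp (- ((x - 2) * b)) / (x - 2)))"
proof -
  let ?h = "\<lambda>z. ennreal (exp (- (z * x)) * W z / z) * indicator {0<..} z"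
  let ?r = "\<lambda>z. ennreal (M / b) * (ennreal (exp (- ((x - 2) * z))) * indicator {b..} z)"
  note bound = theta_integrand_le[OF W b \<open>0 \<le> l\<close> \<open>0 \<le> M\<close> near far, where x = x]
  have "theta_integral \<Phi> W x \<le> ennreal x * (\<integral>\<^sup>+ z. ennreal l * ?h z + ?r z \<partial>lborel)"
    unfolding theta_integral_def by (intro mult_left_mono nn_integral_mono bound zero_le)
  also have "(\<integral>\<^sup>+ z. ennreal l * ?h z + ?r z \<partial>lborel)
      = (\<integral>\<^sup>+ z. ennreal l * ?h z \<partial>lborel) + (\<integral>\<^sup>+ z. ?r z \<partial>lborel)"
  proof (rule nn_integral_add)
    show "(\<lambda>z. ennreal l * ?h z) \<in> borel_measurable lborel"
      using scale_function_div_measurable[OF W, of x] by simp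
    show "?r \<in> borel_measurable lborel"
      by measurable
  qed
  also have "(\<integral>\<^sup>+ z. ennreal l * ?h z \<partial>lborel) = ennreal l * tail_integral_inverse S x"
    using x by (simp add: nn_integral_cmult scale_function_div_measurable[OF W]
        scale_function_laplace_div[OF W])
  also have "(\<integral>\<^sup>+ z. ?r z \<partial>lborel) = ennreal (M / b) * ennreal (exp (- ((x - 2) * b)) / (x - 2))"
  proof -
    have "(\<lambda>z. ennreal (exp (- ((x - 2) * z))) * indicator {b..} z) \<in> borel_measurable lborel"
      by measurable
    then show ?thesis
      using x by (simp add: nn_integral_cmult nn_integral_exp_minus_to_infinity)
  qed
  also have "ennreal x * (ennreal l * tail_integral_inverse S x
        + ennreal (M / b) * ennreal (exp (- ((x - 2) * b)) / (x - 2)))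
      = ennreal l * (ennreal x * tail_integral_inverse S x)
      + ennreal (M / b * (x * exp (- ((x - 2) * b)) / (x - 2)))"
  proof -
    have "ennreal x * (ennreal (M / b) * ennreal (exp (- ((x - 2) * b)) / (x - 2)))
        = ennreal (M / b * (x * exp (- ((x - 2) * b)) / (x - 2)))"
      using x b \<open>0 \<le> M\<close> by (simp add: ennreal_mult'[symmetric] mult_ac)
    then show ?thesis
      unfolding distrib_left by (simp only: mult.left_commute)
  qed
  finally show ?thesis .
qed

lemma eventually_theta_integral_le:
  assumes W: "is_scale_function S W" and "0 < S 1" and lam: "0 \<le> lam"
    and Phi_ge: "\<And>z. 0 \<le> z \<Longrightarrow> lam \<le> \<Phi> z"
    and Phi_le: "\<And>z. 0 \<le> z \<Longrightarrow> \<Phi> z \<le> C * exp z"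
    and Phi_lim: "(\<Phi> \<longlongrightarrow> lam) (at_right 0)"
    and "0 < e"
  shows "\<exists>r. (r \<longlongrightarrow> 0) at_top \<and> (\<forall>\<^sub>F x in at_top.
           theta_integral \<Phi> W x
           \<le> ennreal (lam + e) * (ennreal x * tail_integral_inverse S x) + ennreal (r x))"
proof -
  obtain b where b: "0 < b" "\<And>z. 0 < z \<Longrightarrow> z < b \<Longrightarrow> \<Phi> z \<le> lam + e"
    using order_tendstoD(2)[OF Phi_lim, of "lam + e"] \<open>0 < e\<close>
    by (auto simp: eventually_at_right_field intro: less_imp_le)
  define M where "M = C * exp 1 / S 1"
  have "0 \<le> C" using Phi_ge[of 0] Phi_le[of 0] lam by simp
  then have "0 \<le> M" using \<open>0 < S 1\<close> by (simp add: M_def)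
  have far: "\<Phi> z * W z \<le> M * exp (2 * z)" if "b \<le> z" for z
  proof -
    have "\<Phi> z * W z \<le> C * exp z * (exp (z + 1) / S 1)"
      using that b lam Phi_ge[of z] Phi_le[of z] scale_function_nonneg[OF W, of z]
        scale_function_le_exp[OF W \<open>0 < S 1\<close>, of z]
      by (intro mult_mono) auto
    also have "\<dots> = M * exp (2 * z)"
      by (simp add: M_def field_simps flip: exp_add)
    finally show ?thesis .
  qed
  have "((\<lambda>x. x * exp (- ((x - 2) * b)) / (x - 2)) \<longlongrightarrow> 0) at_top"
    using b by real_asymp
  then have "((\<lambda>x. M / b * (x * exp (- ((x - 2) * b)) / (x - 2))) \<longlongrightarrow> 0) at_top"
    by (rule tendsto_mult_right_zero)
  moreover have "\<forall>\<^sub>F x in at_top. theta_integral \<Phi> W x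
      \<le> ennreal (lam + e) * (ennreal x * tail_integral_inverse S x)
      + ennreal (M / b * (x * exp (- ((x - 2) * b)) / (x - 2)))"
    using eventually_gt_at_top[of 2]
  proof eventually_elim
    case (elim x)
    show ?case
      using \<open>0 < e\<close> lam \<open>0 \<le> M\<close> by (intro theta_integral_le[OF W elim b(1) _ _ b(2) far]) simp_all
  qed
  ultimately show ?thesis by blast
qed

lemma tendsto_theta_integral:
  assumes W: "is_scale_function S W" and "0 < S 1" and lam: "0 \<le> lam"
    and Phi_ge: "\<And>z. 0 \<le> z \<Longrightarrow> lam \<le> \<Phi> z"
    and Phi_le: "\<And>z. 0 \<le> z \<Longrightarrow> \<Phi> z \<le> C * exp z"
    and Phi_lim: "(\<Phi> \<longlongrightarrow> lam) (at_right 0)"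
    and tail: "((\<lambda>x. ennreal x * tail_integral_inverse S x) \<longlongrightarrow> L) at_top"
    and nondegenerate: "0 < lam \<or> L < \<infinity>"
  shows "(theta_integral \<Phi> W \<longlongrightarrow> ennreal lam * L) at_top"
proof (rule order_tendstoI)
  fix t assume "t < ennreal lam * L"
  have "((\<lambda>x. ennreal lam * (ennreal x * tail_integral_inverse S x)) \<longlongrightarrow> ennreal lam * L) at_top"
    by (intro ennreal_tendsto_cmult tail) simp
  then have "\<forall>\<^sub>F x in at_top. t < ennreal lam * (ennreal x * tail_integral_inverse S x)"
    using \<open>t < ennreal lam * L\<close> by (rule order_tendstoD)
  moreover have "\<forall>\<^sub>F x in at_top.
      ennreal lam * (ennreal x * tail_integral_inverse S x) \<le> theta_integral \<Phi> W x"
    using eventually_gt_at_top[of 0]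
    by eventually_elim (simp add: theta_integral_ge[OF W _ lam] Phi_ge)
  ultimately show "\<forall>\<^sub>F x in at_top. t < theta_integral \<Phi> W x"
    by eventually_elim (rule less_le_trans)
next
  fix t assume t: "ennreal lam * L < t"
  with nondegenerate obtain l where L: "L = ennreal l" "0 \<le> l"
    by (cases L) (auto simp: ennreal_mult_top)
  have "((\<lambda>e. (lam + e) * l) \<longlongrightarrow> (lam + 0) * l) (at_right 0)"
    by (intro tendsto_intros)
  from tendsto_ennrealI[OF this] have "\<forall>\<^sub>F e in at_right 0. ennreal ((lam + e) * l) < t"
    using t L lam by (intro order_tendstoD) (simp_all add: ennreal_mult)
  then have "\<forall>\<^sub>F e in at_right 0. 0 < e \<and> ennreal ((lam + e) * l) < t"
    by (intro eventually_conj eventually_at_right_less)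
  then obtain e where e: "0 < e" "ennreal ((lam + e) * l) < t"
    using eventually_happens[of _ "at_right (0::real)"] by auto
  obtain r where r: "(r \<longlongrightarrow> 0) at_top" and theta_le: "\<forall>\<^sub>F x in at_top.
      theta_integral \<Phi> W x
      \<le> ennreal (lam + e) * (ennreal x * tail_integral_inverse S x) + ennreal (r x)"
    using eventually_theta_integral_le[OF W \<open>0 < S 1\<close> lam Phi_ge Phi_le Phi_lim e(1)] by blast
  have "((\<lambda>x. ennreal (lam + e) * (ennreal x * tail_integral_inverse S x) + ennreal (r x))
      \<longlongrightarrow> ennreal (lam + e) * L + ennreal 0) at_top"
    by (intro tendsto_add ennreal_tendsto_cmult tail tendsto_ennrealI r) simp
  moreover have "ennreal (lam + e) * L + ennreal 0 = ennreal ((lam + e) * l)"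
    using L lam e by (simp add: ennreal_mult')
  ultimately have "\<forall>\<^sub>F x in at_top.
      ennreal (lam + e) * (ennreal x * tail_integral_inverse S x) + ennreal (r x) < t"
    using e(2) by (auto intro: order_tendstoD)
  with theta_le show "\<forall>\<^sub>F x in at_top. theta_integral \<Phi> W x < t"
    by eventually_elim (rule le_less_trans)
qed

theorem proposition4p4:
  fixes \<mu> \<eta> :: "real measure" and gam lam ah d :: real and W :: "real \<Rightarrow> real"
  assumes pi_sets: "sets \<mu> = sets borel"
    and pi_levy: "(\<integral>\<^sup>+ u\<in>{0<..}. ennreal (min 1 (u\<^sup>2)) \<partial>\<mu>) < \<infinity>"
    and lam: "lam \<ge> 0"
    and eta_sets: "sets \<eta> = sets borel"
    and eta_int: "(\<integral>\<^sup>+ u\<in>{0<..}. ennreal (min u (u\<^sup>2)) \<partial>\<eta>) < \<infinity>"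
    and ah: "ah \<ge> 0" and d: "d \<ge> 0"
    and Sigma_int: "(\<integral>\<^sup>+ u\<in>{1..}. inverse (ennreal (Sigma_fun ah d \<eta> u)) \<partial>lborel) < \<infinity>"
    and W: "is_scale_function (Sigma_fun ah d \<eta>) W"
  shows "(lam > 0 \<longrightarrow>
            (ah > 0 \<longrightarrow> theta_upper (Phi_fun gam \<mu> lam) W = ennreal (lam / ah)
                       \<and> theta_lower (Phi_fun gam \<mu> lam) W = ennreal (lam / ah)) \<and>
            (ah = 0 \<longrightarrow> theta_upper (Phi_fun gam \<mu> lam) W = \<infinity>
                       \<and> theta_lower (Phi_fun gam \<mu> lam) W = \<infinity>))
       \<and> (lam = 0 \<and> ah > 0 \<longrightarrow>
            theta_upper (Phi_fun gam \<mu> lam) W = 0 \<and> theta_lower (Phi_fun gam \<mu> lam) W = 0)"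
proof -
  let ?\<Phi> = "Phi_fun gam \<mu> lam"
  have Sigma_pos: "\<And>y. 0 < y \<Longrightarrow> 0 < Sigma_fun ah d \<eta> y"
    by (rule Sigma_fun_pos[OF eta_sets eta_int ah d Sigma_int])
  have tail: "((\<lambda>x. ennreal x * tail_integral_inverse (Sigma_fun ah d \<eta>) x)
      \<longlongrightarrow> inverse (ennreal ah)) at_top"
    using Sigma_pos
    by (intro tendsto_mult_tail_integral_inverse tendsto_Sigma_fun_div_square[OF eta_sets eta_int]
        eventually_at_top_linorderI[of 1]) simp
  have "theta_upper ?\<Phi> W = ennreal lam * inverse (ennreal ah)
      \<and> theta_lower ?\<Phi> W = ennreal lam * inverse (ennreal ah)" if "0 < lam \<or> 0 < ah"
  proof -
    have "(theta_integral ?\<Phi> W \<longlongrightarrow> ennreal lam * inverse (ennreal ah)) at_top"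
      using that
      by (intro tendsto_theta_integral[OF W Sigma_pos lam Phi_fun_ge[OF pi_sets pi_levy]
            Phi_fun_le_exp[OF pi_sets pi_levy lam]
            tendsto_Phi_fun_at_right_0[OF pi_sets pi_levy] tail])
        (auto simp: inverse_ennreal)
    then show ?thesis
      unfolding theta_upper_def theta_lower_def by (simp add: lim_imp_Limsup lim_imp_Liminf)
  qed
  moreover have "ennreal lam * inverse (ennreal ah) = ennreal (lam / ah)" if "0 < ah"
    using that lam by (simp add: inverse_ennreal ennreal_mult'[symmetric] divide_inverse)
  moreover have "ennreal lam * inverse (ennreal 0) = \<infinity>" if "0 < lam"
    using that by (simp add: ennreal_mult_top)
  ultimately show ?thesis
    using ah by auto
qed

end
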